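(* Let $n\ge 2$, $\omega\in\mathbb{R}^n$ and $k\in\mathbb{R}_{>0}^n$ satisfy (IC1) $\omega_1+\cdots+\omega_n=0$, (IC2) $\omega\neq(0,\ldots,0)$, and (IC3) $k_1,\ldots,k_n>0$ with $\left|\frac{\omega_1}{k_1}\right|\le\left|\frac{\omega_2}{k_2}\right|\le\cdots\le\left|\frac{\omega_n}{k_n}\right|$. Let $\Theta_{\omega,k}$ be the set of all $\theta\in(-\pi,\pi]^n$ such that $$\omega_\nu=\frac1n\sum_{\mu=1}^n k_\nu k_\mu\sin(\theta_\nu-\theta_\mu)\quad\text{for }\nu=1,\ldots,n$$ and (OC1) $\sum_{\mu=1}^n k_\mu e^{i\theta_\mu}\in\mathbb{R}_{\ge0}$. Then $$\Theta_{\omega,k}=\bigcup_{\sigma\in\{-1,+1\}^n}\Theta_{\omega,k,\sigma},$$ where $$\Theta_{\omega,k,\sigma}=\bigcup_{R\in\mathcal{R}_{\omega,k,\sigma}}\left\{\theta\in(-\pi,\pi]^n:\ \sin\theta_\nu=\frac{\omega_\nu}{k_\nu\sqrt R}\text{ and }\operatorname{sign}\cos\theta_\nu=\sigma_\nu\text{ for }\nu=1,\ldots,n\right\},$$ $$\mathcal{R}_{\omega,k,\sigma}=\left\{R\in\mathbb{R}_{>0}:\ R=\frac1n\sum_{\mu=1}^n\sigma_\mu\sqrt{k_\mu^2R-\omega_\mu^2}\right\}.$$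
   Context: Square roots denote the nonnegative real square root; membership $R\in\mathcal{R}_{\omega,k,\sigma}$ requires the equation to hold in the reals, i.e. with $k_\mu^2R-\omega_\mu^2\ge0$ for all $\mu$. The elements of $\Theta_{\omega,k}$ are the equilibria of the rank-one coupled Kuramoto model $\frac{d\theta_\nu}{dt}=\omega_\nu-\frac1n\sum_{\mu}k_\nu k_\mu\sin(\theta_\nu-\theta_\mu)$, normalized by (OC1) to select representatives modulo a common shift of all angles. *)

theory Defs
  imports "HOL-Analysis.Analysis" "HOL-Library.FuncSet"
begin

text \<open>Indices are 0,...,n-1 (shifted from 1,...,n). Vectors in R^n are
  functions nat => real restricted to {0..<n}; angle vectors are extensional
  functions in {0..<n} ->E (-pi,pi].\<close>

text \<open>Sign with values in {-1,+1}; convention sign 0 = +1.\<close>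
definition sign_pm :: "real \<Rightarrow> real" where
  "sign_pm x = (if x < 0 then -1 else 1)"

definition Theta :: "nat \<Rightarrow> (nat \<Rightarrow> real) \<Rightarrow> (nat \<Rightarrow> real) \<Rightarrow> (nat \<Rightarrow> real) set" where
  "Theta n \<omega> k = {\<theta> \<in> {0..<n} \<rightarrow>\<^sub>E {-pi<..pi}.
      (\<forall>\<nu><n. \<omega> \<nu> = (1 / real n) * (\<Sum>\<mu><n. k \<nu> * k \<mu> * sin (\<theta> \<nu> - \<theta> \<mu>)))
    \<and> (\<Sum>\<mu><n. complex_of_real (k \<mu>) * exp (\<i> * complex_of_real (\<theta> \<mu>))) \<in> complex_of_real ` {0..}}"

text \<open>The set R_{omega,k,sigma}; the equation is required to hold in the reals.\<close>
definition Rset :: "nat \<Rightarrow> (nat \<Rightarrow> real) \<Rightarrow> (nat \<Rightarrow> real) \<Rightarrow> (nat \<Rightarrow> real) \<Rightarrow> real set" where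
  "Rset n \<omega> k \<sigma> = {R. R > 0 \<and> (\<forall>\<mu><n. (k \<mu>)\<^sup>2 * R - (\<omega> \<mu>)\<^sup>2 \<ge> 0)
      \<and> R = (1 / real n) * (\<Sum>\<mu><n. \<sigma> \<mu> * sqrt ((k \<mu>)\<^sup>2 * R - (\<omega> \<mu>)\<^sup>2))}"

definition Theta_sigma :: "nat \<Rightarrow> (nat \<Rightarrow> real) \<Rightarrow> (nat \<Rightarrow> real) \<Rightarrow> (nat \<Rightarrow> real) \<Rightarrow> (nat \<Rightarrow> real) set" where
  "Theta_sigma n \<omega> k \<sigma> = (\<Union>R \<in> Rset n \<omega> k \<sigma>.
      {\<theta> \<in> {0..<n} \<rightarrow>\<^sub>E {-pi<..pi}.
        \<forall>\<nu><n. sin (\<theta> \<nu>) = \<omega> \<nu> / (k \<nu> * sqrt R) \<and> sign_pm (cos (\<theta> \<nu>)) = \<sigma> \<nu>})"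

end

theory Submission
  imports Defs
begin

text \<open>Let \<open>C + i S = \<Sum>\<^sub>\<mu> k\<^sub>\<mu> exp (i \<theta>\<^sub>\<mu>)\<close> be the order parameter. The coupling term
  equals \<open>k\<^sub>\<nu> (C sin \<theta>\<^sub>\<nu> - S cos \<theta>\<^sub>\<nu>) / n\<close>, so under (OC1), i.e. \<open>S = 0 \<le> C\<close>,
  the equilibrium equations say \<open>\<omega>\<^sub>\<nu> = r k\<^sub>\<nu> sin \<theta>\<^sub>\<nu>\<close> with \<open>r = C / n\<close>, and (IC2)
  forces \<open>r > 0\<close>; conversely (IC1) gives back \<open>S = \<Sum>\<^sub>\<nu> \<omega>\<^sub>\<nu> / r = 0\<close>. Given the sine
  equation, the radicand \<open>k\<^sub>\<nu>\<^sup>2 r\<^sup>2 - \<omega>\<^sub>\<nu>\<^sup>2\<close> is \<open>(r k\<^sub>\<nu> cos \<theta>\<^sub>\<nu>)\<^sup>2\<close>, so with \<open>\<sigma>\<^sub>\<nu>\<close> the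
  sign of \<open>cos \<theta>\<^sub>\<nu>\<close> the self-consistency equation for \<open>R = r\<^sup>2\<close> is just \<open>C = n r\<close>.
  Both sides of the theorem are therefore the angle vectors phase-locked with some
  \<open>r > 0\<close>.\<close>

definition phase_locked ::
    "nat \<Rightarrow> (nat \<Rightarrow> real) \<Rightarrow> (nat \<Rightarrow> real) \<Rightarrow> real \<Rightarrow> (nat \<Rightarrow> real) \<Rightarrow> bool" where
  "phase_locked n \<omega> k r \<theta> \<longleftrightarrow>
     (\<forall>\<nu><n. \<omega> \<nu> = r * k \<nu> * sin (\<theta> \<nu>)) \<and> (\<Sum>\<mu><n. k \<mu> * cos (\<theta> \<mu>)) = real n * r"

lemma sum_of_real_mult_exp_ii:
  fixes k \<theta> :: "nat \<Rightarrow> real"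
  shows "(\<Sum>\<mu>\<in>A. complex_of_real (k \<mu>) * exp (\<i> * complex_of_real (\<theta> \<mu>)))
       = Complex (\<Sum>\<mu>\<in>A. k \<mu> * cos (\<theta> \<mu>)) (\<Sum>\<mu>\<in>A. k \<mu> * sin (\<theta> \<mu>))"
  by (simp add: complex_eq_iff Re_exp Im_exp)

lemma of_real_image_atLeast_0: "complex_of_real ` {0..} = \<real>\<^sub>\<ge>\<^sub>0"
  by (auto simp: nonneg_Reals_def)

lemma sum_mult_sin_diff:
  fixes k \<theta> :: "nat \<Rightarrow> real"
  shows "(\<Sum>\<mu>\<in>A. c * k \<mu> * sin (t - \<theta> \<mu>))
       = c * (sin t * (\<Sum>\<mu>\<in>A. k \<mu> * cos (\<theta> \<mu>)) - cos t * (\<Sum>\<mu>\<in>A. k \<mu> * sin (\<theta> \<mu>)))"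
  by (simp add: sin_diff algebra_simps sum_subtractf sum_distrib_left)

lemma sign_pm_mult_abs: "sign_pm x * \<bar>x\<bar> = x"
  by (simp add: sign_pm_def)

lemma sign_pm_in_pm_one: "sign_pm x \<in> {-1, 1}"
  by (simp add: sign_pm_def)

lemma square_diff_square_sin: "a\<^sup>2 - (a * sin t)\<^sup>2 = (a * cos t)\<^sup>2"
  for a t :: real
  by (simp add: power_mult_distrib cos_squared_eq algebra_simps)

lemma sign_pm_cos_mult_sqrt:
  fixes a t :: real
  assumes "a \<ge> 0"
  shows "sign_pm (cos t) * sqrt (a\<^sup>2 - (a * sin t)\<^sup>2) = a * cos t"
proof -
  have "sqrt (a\<^sup>2 - (a * sin t)\<^sup>2) = a * \<bar>cos t\<bar>"
    using assms by (simp add: square_diff_square_sin abs_mult)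
  then show ?thesis
    using sign_pm_mult_abs[of "cos t"] by (simp add: algebra_simps)
qed

lemma Theta_eq_phase_locked:
  assumes "n > 0"
    and sum_\<omega>: "(\<Sum>\<nu><n. \<omega> \<nu>) = 0"
    and \<omega>_nonzero: "\<exists>\<nu><n. \<omega> \<nu> \<noteq> 0"
  shows "Theta n \<omega> k
       = {\<theta> \<in> {0..<n} \<rightarrow>\<^sub>E {-pi<..pi}. \<exists>r>0. phase_locked n \<omega> k r \<theta>}"
proof (intro equalityI subsetI CollectI conjI)
  fix \<theta>
  define C where "C = (\<Sum>\<mu><n. k \<mu> * cos (\<theta> \<mu>))"
  define S where "S = (\<Sum>\<mu><n. k \<mu> * sin (\<theta> \<mu>))"
  have coupling_eq: "(\<Sum>\<mu><n. k \<nu> * k \<mu> * sin (\<theta> \<nu> - \<theta> \<mu>))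
      = k \<nu> * (sin (\<theta> \<nu>) * C - cos (\<theta> \<nu>) * S)" for \<nu>
    by (simp add: sum_mult_sin_diff C_def S_def)
  have OC1_iff: "(\<Sum>\<mu><n. complex_of_real (k \<mu>) * exp (\<i> * complex_of_real (\<theta> \<mu>)))
      \<in> complex_of_real ` {0..} \<longleftrightarrow> S = 0 \<and> C \<ge> 0"
    by (auto simp: sum_of_real_mult_exp_ii of_real_image_atLeast_0 complex_nonneg_Reals_iff
        C_def S_def)
  {
    assume \<theta>: "\<theta> \<in> Theta n \<omega> k"
    then show "\<theta> \<in> {0..<n} \<rightarrow>\<^sub>E {-pi<..pi}" by (simp add: Theta_def)
    have "S = 0" "C \<ge> 0" using \<theta> OC1_iff by (auto simp: Theta_def)
    then have \<omega>_eq: "\<forall>\<nu><n. \<omega> \<nu> = C / real n * k \<nu> * sin (\<theta> \<nu>)"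
      using \<theta> by (auto simp: Theta_def coupling_eq)
    with \<omega>_nonzero \<open>C \<ge> 0\<close> have "C > 0" by force
    then show "\<exists>r>0. phase_locked n \<omega> k r \<theta>"
      using \<omega>_eq \<open>n > 0\<close> by (intro exI[of _ "C / real n"]) (simp add: phase_locked_def C_def)
  next
    assume \<theta>: "\<theta> \<in> {\<theta> \<in> {0..<n} \<rightarrow>\<^sub>E {-pi<..pi}. \<exists>r>0. phase_locked n \<omega> k r \<theta>}"
    then obtain r where "r > 0" and \<omega>_eq: "\<forall>\<nu><n. \<omega> \<nu> = r * k \<nu> * sin (\<theta> \<nu>)"
      and "C = real n * r"
      by (auto simp: phase_locked_def C_def)
    have "S = (\<Sum>\<nu><n. \<omega> \<nu>) / r"
      using \<omega>_eq \<open>r > 0\<close> by (simp add: S_def sum_divide_distrib)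
    with sum_\<omega> have "S = 0" by simp
    moreover have "C \<ge> 0" using \<open>C = real n * r\<close> \<open>r > 0\<close> by simp
    moreover have "\<forall>\<nu><n. \<omega> \<nu> = 1 / real n * (\<Sum>\<mu><n. k \<nu> * k \<mu> * sin (\<theta> \<nu> - \<theta> \<mu>))"
      using \<omega>_eq \<open>C = real n * r\<close> \<open>S = 0\<close> \<open>n > 0\<close> by (simp add: coupling_eq)
    ultimately show "\<theta> \<in> Theta n \<omega> k"
      using \<theta> OC1_iff by (simp add: Theta_def)
  }
qed

lemma sq_in_Rset_iff:
  assumes "n > 0" and k_nonneg: "\<forall>\<nu><n. k \<nu> \<ge> 0" and "r > 0"
    and \<omega>_eq: "\<forall>\<nu><n. \<omega> \<nu> = r * k \<nu> * sin (\<theta> \<nu>)"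
    and \<sigma>_eq: "\<forall>\<nu><n. \<sigma> \<nu> = sign_pm (cos (\<theta> \<nu>))"
  shows "r\<^sup>2 \<in> Rset n \<omega> k \<sigma> \<longleftrightarrow> (\<Sum>\<mu><n. k \<mu> * cos (\<theta> \<mu>)) = real n * r"
proof -
  have radicand_eq: "(k \<nu>)\<^sup>2 * r\<^sup>2 - (\<omega> \<nu>)\<^sup>2 = (r * k \<nu>)\<^sup>2 - (r * k \<nu> * sin (\<theta> \<nu>))\<^sup>2"
    if "\<nu> < n" for \<nu>
    using \<omega>_eq that by (simp add: power_mult_distrib)
  have "\<forall>\<nu><n. (k \<nu>)\<^sup>2 * r\<^sup>2 - (\<omega> \<nu>)\<^sup>2 \<ge> 0"
    using radicand_eq by (simp add: square_diff_square_sin)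
  moreover have "\<sigma> \<nu> * sqrt ((k \<nu>)\<^sup>2 * r\<^sup>2 - (\<omega> \<nu>)\<^sup>2) = r * (k \<nu> * cos (\<theta> \<nu>))"
    if "\<nu> < n" for \<nu>
  proof -
    have "r * k \<nu> \<ge> 0" using k_nonneg \<open>r > 0\<close> that by simp
    from sign_pm_cos_mult_sqrt[OF this, of "\<theta> \<nu>"] show ?thesis
      using \<sigma>_eq radicand_eq[OF that] that by (simp add: mult.assoc)
  qed
  then have "(\<Sum>\<mu><n. \<sigma> \<mu> * sqrt ((k \<mu>)\<^sup>2 * r\<^sup>2 - (\<omega> \<mu>)\<^sup>2))
      = r * (\<Sum>\<mu><n. k \<mu> * cos (\<theta> \<mu>))"
    by (simp add: sum_distrib_left)
  ultimately show ?thesis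
    using \<open>r > 0\<close> \<open>n > 0\<close> by (auto simp: Rset_def power2_eq_square field_simps)
qed

lemma Union_Theta_sigma_eq_phase_locked:
  assumes "n > 0" and k_pos: "\<forall>\<nu><n. k \<nu> > 0"
  shows "(\<Union>\<sigma> \<in> {0..<n} \<rightarrow>\<^sub>E {-1, 1}. Theta_sigma n \<omega> k \<sigma>)
       = {\<theta> \<in> {0..<n} \<rightarrow>\<^sub>E {-pi<..pi}. \<exists>r>0. phase_locked n \<omega> k r \<theta>}"
proof (intro equalityI subsetI)
  have sin_eq_iff: "(\<forall>\<nu><n. sin (\<theta> \<nu>) = \<omega> \<nu> / (k \<nu> * r)) \<longleftrightarrow> (\<forall>\<nu><n. \<omega> \<nu> = r * k \<nu> * sin (\<theta> \<nu>))"
    if "r > 0" for \<theta> r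
    using k_pos that by (force simp: field_simps)
  have k_nonneg: "\<forall>\<nu><n. k \<nu> \<ge> 0" using k_pos by (simp add: less_imp_le)
  fix \<theta>
  {
    assume "\<theta> \<in> (\<Union>\<sigma> \<in> {0..<n} \<rightarrow>\<^sub>E {-1, 1}. Theta_sigma n \<omega> k \<sigma>)"
    then obtain \<sigma> R where "R \<in> Rset n \<omega> k \<sigma>" and \<theta>: "\<theta> \<in> {0..<n} \<rightarrow>\<^sub>E {-pi<..pi}"
      and sin_eq: "\<forall>\<nu><n. sin (\<theta> \<nu>) = \<omega> \<nu> / (k \<nu> * sqrt R)"
      and \<sigma>_eq: "\<forall>\<nu><n. \<sigma> \<nu> = sign_pm (cos (\<theta> \<nu>))"
      unfolding Theta_sigma_def by auto
    define r where "r = sqrt R"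
    have "R > 0" using \<open>R \<in> Rset n \<omega> k \<sigma>\<close> by (simp add: Rset_def)
    then have "r > 0" and "R = r\<^sup>2" by (auto simp: r_def)
    have \<omega>_eq: "\<forall>\<nu><n. \<omega> \<nu> = r * k \<nu> * sin (\<theta> \<nu>)"
      using sin_eq sin_eq_iff[OF \<open>r > 0\<close>] by (simp add: r_def)
    with sq_in_Rset_iff[OF \<open>n > 0\<close> k_nonneg \<open>r > 0\<close> \<omega>_eq \<sigma>_eq] \<open>R \<in> Rset n \<omega> k \<sigma>\<close>
    have "phase_locked n \<omega> k r \<theta>" by (simp add: phase_locked_def \<open>R = r\<^sup>2\<close>)
    with \<theta> \<open>r > 0\<close>
    show "\<theta> \<in> {\<theta> \<in> {0..<n} \<rightarrow>\<^sub>E {-pi<..pi}. \<exists>r>0. phase_locked n \<omega> k r \<theta>}" by blast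
  next
    assume "\<theta> \<in> {\<theta> \<in> {0..<n} \<rightarrow>\<^sub>E {-pi<..pi}. \<exists>r>0. phase_locked n \<omega> k r \<theta>}"
    then obtain r where \<theta>: "\<theta> \<in> {0..<n} \<rightarrow>\<^sub>E {-pi<..pi}" and "r > 0"
      and \<omega>_eq: "\<forall>\<nu><n. \<omega> \<nu> = r * k \<nu> * sin (\<theta> \<nu>)"
      and sum_cos: "(\<Sum>\<mu><n. k \<mu> * cos (\<theta> \<mu>)) = real n * r"
      by (auto simp: phase_locked_def)
    define \<sigma> where "\<sigma> = restrict (\<lambda>\<nu>. sign_pm (cos (\<theta> \<nu>))) {0..<n}"
    have \<sigma>: "\<sigma> \<in> {0..<n} \<rightarrow>\<^sub>E {-1, 1}" using sign_pm_in_pm_one by (auto simp: \<sigma>_def)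
    have \<sigma>_eq: "\<forall>\<nu><n. \<sigma> \<nu> = sign_pm (cos (\<theta> \<nu>))" by (simp add: \<sigma>_def)
    have R: "r\<^sup>2 \<in> Rset n \<omega> k \<sigma>"
      using sq_in_Rset_iff[OF \<open>n > 0\<close> k_nonneg \<open>r > 0\<close> \<omega>_eq \<sigma>_eq] sum_cos by simp
    have "\<forall>\<nu><n. sin (\<theta> \<nu>) = \<omega> \<nu> / (k \<nu> * sqrt (r\<^sup>2))"
      using \<omega>_eq sin_eq_iff[OF \<open>r > 0\<close>] \<open>r > 0\<close> by simp
    then have "\<theta> \<in> Theta_sigma n \<omega> k \<sigma>"
      unfolding Theta_sigma_def using \<theta> \<sigma>_eq by (intro UN_I[OF R]) auto
    with \<sigma> show "\<theta> \<in> (\<Union>\<sigma> \<in> {0..<n} \<rightarrow>\<^sub>E {-1, 1}. Theta_sigma n \<omega> k \<sigma>)" by blast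
  }
qed

text \<open>The ordering (IC3) of the ratios \<open>\<bar>\<omega>\<^sub>\<nu> / k\<^sub>\<nu>\<bar>\<close> is only a labelling
  convention and is not needed.\<close>

theorem theorem1:
  fixes n :: nat and \<omega> k :: "nat \<Rightarrow> real"
  assumes "n \<ge> 2"
    and IC1: "(\<Sum>\<nu><n. \<omega> \<nu>) = 0"
    and IC2: "\<exists>\<nu><n. \<omega> \<nu> \<noteq> 0"
    and IC3_pos: "\<forall>\<nu><n. k \<nu> > 0"
    and IC3_ord: "\<forall>\<nu>. \<nu> + 1 < n \<longrightarrow> \<bar>\<omega> \<nu> / k \<nu>\<bar> \<le> \<bar>\<omega> (\<nu> + 1) / k (\<nu> + 1)\<bar>"
  shows "Theta n \<omega> k = (\<Union>\<sigma> \<in> {0..<n} \<rightarrow>\<^sub>E {-1, 1}. Theta_sigma n \<omega> k \<sigma>)"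
proof -
  have "n > 0" using \<open>n \<ge> 2\<close> by simp
  then show ?thesis
    using Theta_eq_phase_locked[OF _ IC1 IC2] Union_Theta_sigma_eq_phase_locked[OF _ IC3_pos]
    by simp
qed

end
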